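(* Let $p(x,y)$ be a real polynomial with $p(0,0)=0$, $\nabla p(0,0)=(0,0)$, $\dim\operatorname{Co}N_p=2$, such that for every $A\in\mathbb{N}^2$ the main $A$-quasi-homogeneous form of $p$ is nonnegative on $\mathbb{R}^2$. Let $A=(A_1,A_2)\in\mathcal{A}_p$ and suppose that for all $(x,y)$ with $\varphi_1^A(x,y)=0$, $x\neq0$, $y\neq0$ one has $\varphi_2^A(x,y)>0$. Let $x^{\chi_1}y^{\eta_1}$ be the monomial of the main term of $\varphi_2^A$. Then for every $u_0\in U_p(A)$ the system $x\neq0$, $y\neq0$, $x^{-A_2}y^{A_1}=u_0$, $x^{\chi_1}y^{\eta_1}g_2^A(u_0)<0$ has no real solution.
   Context: $\mathbb{N}=\{1,2,\dots\}$; $\mathbb{N}_0^2$ is the set of $(A_1,A_2)\in\mathbb{N}^2$ with $\gcd(A_1,A_2)=1$. $N_p$ is the support of $p$ and $\operatorname{Co}N_p$ its convex hull. For $A\in\mathbb{N}^2$ the main $A$-quasi-homogeneous form of $p$ is the sum of the terms of $p$ whose exponent vectors $k$ minimize $\langle A,k\rangle$ over $N_p$. For $A\in\mathbb{N}_0^2$, with $B_1^A<B_2^A<\dots$ the distinct values of $\langle A,k\rangle$ on $N_p$, $\varphi_i^A$ is the sum of terms of $p$ with $\langle A,k\rangle=B_i^A$. For such a form $\sum_i c_ix^{\gamma_i}y^{\delta_i}$ ($c_i\ne0$, $\gamma_1>\gamma_2>\dots$), its main term is $c_1x^{\gamma_1}y^{\delta_1}$ and its characteristic polynomial is $\sum_ic_iu^{(\gamma_1-\gamma_i)/A_2}$;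 $g_1^A,g_2^A$ are those of $\varphi_1^A,\varphi_2^A$. $\mathcal{A}_p$ is the set of $A\in\mathbb{N}_0^2$ such that $\varphi_1^A$ has at least three terms, $g_1^A\ge0$ on $\mathbb{R}$, and $g_1^A$ has a real root; $U_p(A)$ is the set of real roots of $g_1^A$. *)

theory Defs
  imports "HOL-Analysis.Analysis"
begin

text \<open>A real polynomial in two variables is represented by its coefficient function
  c :: nat \<times> nat \<Rightarrow> real with finite support; the exponent vector (i,j) stands for x^i y^j.\<close>

definition supp :: "(nat \<times> nat \<Rightarrow> real) \<Rightarrow> (nat \<times> nat) set" where
  "supp c = {k. c k \<noteq> 0}"

definition mono_eval :: "nat \<times> nat \<Rightarrow> real \<Rightarrow> real \<Rightarrow> real" where
  "mono_eval k x y = x ^ fst k * y ^ snd k"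

definition terms_eval :: "(nat \<times> nat \<Rightarrow> real) \<Rightarrow> (nat \<times> nat) set \<Rightarrow> real \<Rightarrow> real \<Rightarrow> real" where
  "terms_eval c S x y = (\<Sum>k\<in>S. c k * mono_eval k x y)"

definition peval :: "(nat \<times> nat \<Rightarrow> real) \<Rightarrow> real \<Rightarrow> real \<Rightarrow> real" where
  "peval c x y = terms_eval c (supp c) x y"

definition newton_pts :: "(nat \<times> nat \<Rightarrow> real) \<Rightarrow> (real \<times> real) set" where
  "newton_pts c = (\<lambda>k. (real (fst k), real (snd k))) ` supp c"

definition wdeg :: "nat \<times> nat \<Rightarrow> nat \<times> nat \<Rightarrow> nat" where
  "wdeg A k = fst A * fst k + snd A * snd k"

definition main_terms :: "(nat \<times> nat \<Rightarrow> real) \<Rightarrow> nat \<times> nat \<Rightarrow> (nat \<times> nat) set" where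
  "main_terms c A = {k \<in> supp c. wdeg A k = Min (wdeg A ` supp c)}"

text \<open>B_i^A: the i-th smallest (i \<ge> 1) value of <A,k> on N_p.\<close>
definition Blev :: "(nat \<times> nat \<Rightarrow> real) \<Rightarrow> nat \<times> nat \<Rightarrow> nat \<Rightarrow> nat" where
  "Blev c A i = sorted_list_of_set (wdeg A ` supp c) ! (i - 1)"

definition layer :: "(nat \<times> nat \<Rightarrow> real) \<Rightarrow> nat \<times> nat \<Rightarrow> nat \<Rightarrow> (nat \<times> nat) set" where
  "layer c A i = {k \<in> supp c. wdeg A k = Blev c A i}"

definition phi :: "(nat \<times> nat \<Rightarrow> real) \<Rightarrow> nat \<times> nat \<Rightarrow> nat \<Rightarrow> real \<Rightarrow> real \<Rightarrow> real" where
  "phi c A i x y = terms_eval c (layer c A i) x y"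

definition main_exp :: "(nat \<times> nat \<Rightarrow> real) \<Rightarrow> nat \<times> nat \<Rightarrow> nat \<Rightarrow> nat \<times> nat" where
  "main_exp c A i = (THE k. k \<in> layer c A i \<and> (\<forall>k'\<in>layer c A i. fst k' \<le> fst k))"

definition charpoly :: "(nat \<times> nat \<Rightarrow> real) \<Rightarrow> nat \<times> nat \<Rightarrow> nat \<Rightarrow> real \<Rightarrow> real" where
  "charpoly c A i u = (\<Sum>k\<in>layer c A i. c k * u ^ ((fst (main_exp c A i) - fst k) div snd A))"

definition admissible :: "(nat \<times> nat \<Rightarrow> real) \<Rightarrow> nat \<times> nat \<Rightarrow> bool" where
  "admissible c A \<longleftrightarrow> fst A \<ge> 1 \<and> snd A \<ge> 1 \<and> coprime (fst A) (snd A)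
     \<and> card (layer c A 1) \<ge> 3
     \<and> (\<forall>u. charpoly c A 1 u \<ge> 0) \<and> (\<exists>u. charpoly c A 1 u = 0)"

definition Uset :: "(nat \<times> nat \<Rightarrow> real) \<Rightarrow> nat \<times> nat \<Rightarrow> real set" where
  "Uset c A = {u. charpoly c A 1 u = 0}"

end

theory Submission
  imports Defs
begin

text \<open>On the curve \<open>y^A\<^sub>1 / x^A\<^sub>2 = u\<^sub>0\<close> (with \<open>x, y \<noteq> 0\<close>) every \<open>A\<close>-quasi-homogeneous form
  factors as its main monomial times its characteristic polynomial evaluated at \<open>u\<^sub>0\<close>.
  Since \<open>g\<^sub>1(u\<^sub>0) = 0\<close>, \<open>\<phi>\<^sub>1\<close> vanishes at every such point, so by hypothesis
  \<open>0 < \<phi>\<^sub>2(x,y) = x^\<chi>\<^sub>1 y^\<eta>\<^sub>1 g\<^sub>2(u\<^sub>0)\<close>.\<close>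

lemma monomial_eq_along_weight:
  fixes x y :: "'a :: field"
  assumes "x \<noteq> 0" "y \<noteq> 0" "a2 > 0" "coprime a1 a2"
    and same_weight: "a1 * i + a2 * j = a1 * i' + a2 * j'" and "i \<le> i'"
  shows "x ^ i * y ^ j = x ^ i' * y ^ j' * (y ^ a1 / x ^ a2) ^ ((i' - i) div a2)"
proof -
  have "j' \<le> j"
  proof (rule ccontr)
    assume "\<not> j' \<le> j"
    with \<open>a2 > 0\<close> have "a2 * j < a2 * j'" by simp
    moreover have "a1 * i \<le> a1 * i'" using \<open>i \<le> i'\<close> by simp
    ultimately show False using same_weight by linarith
  qed
  then have balance: "a2 * (j - j') = a1 * (i' - i)"
    using same_weight \<open>i \<le> i'\<close> by (simp add: diff_mult_distrib2)
  then have "a2 dvd i' - i"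
    using \<open>coprime a1 a2\<close> by (metis coprime_commute coprime_dvd_mult_right_iff dvd_triv_left)
  then obtain q where q: "i' - i = a2 * q" by blast
  with balance \<open>a2 > 0\<close> have "j - j' = a1 * q" by (simp add: mult.left_commute)
  with q \<open>i \<le> i'\<close> \<open>j' \<le> j\<close> have "i' = i + a2 * q" "j = j' + a1 * q" "(i' - i) div a2 = q"
    using \<open>a2 > 0\<close> by auto
  then show ?thesis
    using assms(1,2) by (simp add: power_add power_mult power_divide field_simps)
qed

lemma layer_fst_inj:
  assumes "snd A > 0" "k \<in> layer c A i" "k' \<in> layer c A i" "fst k = fst k'"
  shows "k = k'"
proof -
  have "wdeg A k = wdeg A k'"
    using assms(2,3) by (simp add: layer_def)
  then have "snd A * snd k = snd A * snd k'"
    using assms(4) by (simp add: wdeg_def)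
  with assms(1,4) show ?thesis by (simp add: prod_eq_iff)
qed

lemma main_exp_in_layer_max:
  assumes "finite (supp c)" "snd A > 0" "layer c A i \<noteq> {}"
  shows "main_exp c A i \<in> layer c A i" "\<And>k. k \<in> layer c A i \<Longrightarrow> fst k \<le> fst (main_exp c A i)"
proof -
  let ?L = "layer c A i"
  have "finite ?L"
    using assms(1) by (simp add: layer_def)
  then have "Max (fst ` ?L) \<in> fst ` ?L"
    using assms(3) by simp
  then obtain m where m: "m \<in> ?L" "fst m = Max (fst ` ?L)"
    by (metis imageE)
  with \<open>finite ?L\<close> have m_max: "\<forall>k\<in>?L. fst k \<le> fst m" by simp
  have "main_exp c A i = m"
    unfolding main_exp_def
  proof (rule the_equality)
    fix k assume "k \<in> ?L \<and> (\<forall>k'\<in>?L. fst k' \<le> fst k)"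
    with m m_max show "k = m"
      using layer_fst_inj[OF \<open>snd A > 0\<close>] by (meson le_antisym)
  qed (use m m_max in blast)
  with m m_max show "main_exp c A i \<in> ?L" "\<And>k. k \<in> ?L \<Longrightarrow> fst k \<le> fst (main_exp c A i)"
    by auto
qed

text \<open>No nonemptiness hypothesis is needed: for an empty layer \<open>main_exp\<close> is a junk \<open>THE\<close>-value,
  but both sides are then empty sums.\<close>

lemma phi_eq_main_monomial_times_charpoly:
  fixes x y :: real
  assumes "finite (supp c)" "x \<noteq> 0" "y \<noteq> 0" "snd A > 0" "coprime (fst A) (snd A)"
  shows "phi c A i x y = mono_eval (main_exp c A i) x y * charpoly c A i (y ^ fst A / x ^ snd A)"
proof (cases "layer c A i = {}")
  case True
  then show ?thesis by (simp add: phi_def terms_eval_def charpoly_def)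
next
  case False
  let ?m = "main_exp c A i" and ?u = "y ^ fst A / x ^ snd A"
  have "mono_eval k x y = mono_eval ?m x y * ?u ^ ((fst ?m - fst k) div snd A)"
    if "k \<in> layer c A i" for k
    unfolding mono_eval_def
  proof (rule monomial_eq_along_weight)
    show "fst A * fst k + snd A * snd k = fst A * fst ?m + snd A * snd ?m"
      using that main_exp_in_layer_max(1)[OF assms(1,4) False] by (simp add: layer_def wdeg_def)
    show "fst k \<le> fst ?m"
      using that main_exp_in_layer_max(2)[OF assms(1,4) False] by blast
  qed (use assms in auto)
  then show ?thesis
    unfolding phi_def terms_eval_def charpoly_def
    by (simp add: sum_distrib_left mult_ac cong: sum.cong)
qed

theorem mainTheorem7:
  fixes c :: "nat \<times> nat \<Rightarrow> real" and A :: "nat \<times> nat"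
  assumes fin: "finite (supp c)"
    and p0: "peval c 0 0 = 0"
    and gradx: "((\<lambda>x. peval c x 0) has_real_derivative 0) (at 0)"
    and grady: "((\<lambda>y. peval c 0 y) has_real_derivative 0) (at 0)"
    and dim2: "aff_dim (convex hull (newton_pts c)) = 2"
    and mainnn: "\<And>B x y. fst B \<ge> 1 \<Longrightarrow> snd B \<ge> 1 \<Longrightarrow>
                    terms_eval c (main_terms c B) x y \<ge> 0"
    and adm: "admissible c A"
    and phi2pos: "\<And>x y. phi c A 1 x y = 0 \<Longrightarrow> x \<noteq> 0 \<Longrightarrow> y \<noteq> 0 \<Longrightarrow> phi c A 2 x y > 0"
    and chi: "main_exp c A 2 = (\<chi>1, \<eta>1)"
  shows "\<forall>u0 \<in> Uset c A. \<not> (\<exists>x y::real. x \<noteq> 0 \<and> y \<noteq> 0 \<and> y ^ fst A / x ^ snd A = u0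
            \<and> x ^ \<chi>1 * y ^ \<eta>1 * charpoly c A 2 u0 < 0)"
proof (intro ballI notI, elim exE conjE)
  fix u0 x y :: real
  assume "u0 \<in> Uset c A" and x: "x \<noteq> 0" and y: "y \<noteq> 0" and u: "y ^ fst A / x ^ snd A = u0"
    and neg: "x ^ \<chi>1 * y ^ \<eta>1 * charpoly c A 2 u0 < 0"
  have "snd A > 0" "coprime (fst A) (snd A)"
    using adm by (auto simp: admissible_def)
  note factor = phi_eq_main_monomial_times_charpoly[OF fin x y this, unfolded u]
  have "charpoly c A 1 u0 = 0"
    using \<open>u0 \<in> Uset c A\<close> by (simp add: Uset_def)
  then have "phi c A 1 x y = 0"
    by (simp add: factor)
  then have "phi c A 2 x y > 0"
    using phi2pos x y by blast
  with neg show False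
    by (simp add: factor chi mono_eval_def)
qed

end
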